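(* Let $p$ be a prime and let $\sigma$ and $\alpha$ be cardinals with $m(\sigma)\le\alpha$ and $\alpha^\omega\le\sigma$. Then the topological group $\mathbb{Z}(p)^\sigma$ contains an independent $G_\delta$-dense subset $H$ such that the subgroup generated by $H$ (with the subspace topology) has property $\mathfrak{h}$.
   Context: $\mathbb{Z}(p)$ is the cyclic group of order $p$ (discrete), and $\mathbb{Z}(p)^\sigma$ carries the product topology. A subset of $\mathbb{Z}(p)^\sigma$ is independent if it is linearly independent over $\mathbb{Z}(p)$. A subset is $G_\delta$-dense if it meets every nonempty $G_\delta$-subset. For an infinite cardinal $\alpha$, $m(\alpha)$ is the least cardinality of a $G_\delta$-dense subset of a compact group of weight $\alpha$ (independent of the compact group chosen). A subgroup $N$ of a topological Abelian group $K$ is $h$-embedded if every homomorphism $N\to\mathbb{T}$ ($\mathbb{T}$ the circle group) extends to a continuous homomorphism $K\to\mathbb{T}$; $K$ has property $\mathfrak{h}$ if all its countable subgroups are $h$-embedded. *)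

theory Defs
  imports "HOL-Analysis.Analysis" "HOL-Algebra.Algebra" "HOL-Library.Equipollence"
begin

(* Z(p)^sigma: sigma is the cardinality of the index type 's; elements are functions
   's => nat with values in {..<p}, group operation pointwise addition mod p. *)
definition Zp_group :: "nat \<Rightarrow> ('s \<Rightarrow> nat) monoid" where
  "Zp_group p = \<lparr>carrier = {f. \<forall>i. f i < p}, mult = (\<lambda>f g i. (f i + g i) mod p), one = (\<lambda>i. 0)\<rparr>"

definition Zp_top :: "nat \<Rightarrow> ('s \<Rightarrow> nat) topology" where
  "Zp_top p = product_topology (\<lambda>_. discrete_topology {..<p}) UNIV"

definition Zp_independent :: "nat \<Rightarrow> ('s \<Rightarrow> nat) set \<Rightarrow> bool" where
  "Zp_independent p H \<longleftrightarrow>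
     (\<forall>F c. finite F \<and> F \<subseteq> H \<and> (\<forall>h\<in>F. c h < p) \<and> (\<forall>i. (\<Sum>h\<in>F. c h * h i) mod p = 0)
        \<longrightarrow> (\<forall>h\<in>F. c h = 0))"

definition Gdelta_dense :: "'a topology \<Rightarrow> 'a set \<Rightarrow> bool" where
  "Gdelta_dense T D \<longleftrightarrow> (\<forall>S. gdelta_in T S \<and> S \<noteq> {} \<longrightarrow> D \<inter> S \<noteq> {})"

definition topological_group :: "('g, 'b) monoid_scheme \<Rightarrow> 'g topology \<Rightarrow> bool" where
  "topological_group G T \<longleftrightarrow> group G \<and> topspace T = carrier G \<and> Hausdorff_space T \<and>
     continuous_map (prod_topology T T) T (\<lambda>(x, y). x \<otimes>\<^bsub>G\<^esub> y) \<and>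
     continuous_map T T (\<lambda>x. inv\<^bsub>G\<^esub> x)"

definition is_base :: "'a topology \<Rightarrow> 'a set set \<Rightarrow> bool" where
  "is_base T B \<longleftrightarrow> (\<forall>V\<in>B. openin T V) \<and> (\<forall>U. openin T U \<longrightarrow> (\<exists>C\<subseteq>B. \<Union>C = U))"

(* the weight of T is the cardinal |S| *)
definition has_weight :: "'a topology \<Rightarrow> 'k set \<Rightarrow> bool" where
  "has_weight T S \<longleftrightarrow> (\<exists>B. is_base T B \<and> B \<approx> S) \<and> (\<forall>B. is_base T B \<longrightarrow> S \<lesssim> B)"

definition circle_group :: "complex monoid" where
  "circle_group = \<lparr>carrier = sphere 0 1, mult = (*), one = 1\<rparr>"

definition h_embedded :: "('g, 'b) monoid_scheme \<Rightarrow> 'g topology \<Rightarrow> 'g set \<Rightarrow> bool" where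
  "h_embedded G T N \<longleftrightarrow>
     (\<forall>\<phi> \<in> hom (G\<lparr>carrier := N\<rparr>) circle_group.
        \<exists>\<psi> \<in> hom G circle_group. continuous_map T (top_of_set (sphere 0 1)) \<psi> \<and>
          (\<forall>x\<in>N. \<psi> x = \<phi> x))"

definition property_h :: "('g, 'b) monoid_scheme \<Rightarrow> 'g topology \<Rightarrow> bool" where
  "property_h G T \<longleftrightarrow> (\<forall>N. subgroup N G \<and> countable N \<longrightarrow> h_embedded G T N)"

end

theory Submission
  imports Defs "HOL-Number_Theory.Cong"
begin

text \<open>
  In a compact group of weight \<open>\<sigma>\<close> the regular open sets form a base and are determined by their
  traces on a G\<delta>-dense set of size \<open>\<alpha>\<close>, so \<open>\<sigma> \<le> 2\<^sup>\<alpha>\<close>: the coordinates of \<open>\<int>(p)\<^sup>\<sigma>\<close> can be labelled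
  injectively by subsets of \<open>\<alpha>\<close>, and by \<open>\<alpha>\<^sup>\<omega> \<le> \<sigma>\<close> also by all countable lists of requests.
  \<open>H\<close> is the set of columns of a matrix whose entry at a request coordinate is the requested value,
  and elsewhere is read off a table carried by the column, indexed by how a test sequence of the
  column meets the subset labelling the coordinate. Then any countable set of columns takes
  prescribed values at a single coordinate, and any countably many coordinates take prescribed
  values in a single column.

  The first property gives independence, and, since characters of elementary abelian \<open>p\<close>-groups
  extend from subgroups and take values in the \<open>p\<close>-th roots of unity, it makes every character of a
  countable subgroup of \<open>\<langle>H\<rangle>\<close> agree there with a coordinate character, which is continuous. The
  second property gives G\<delta>-density, because a nonempty G\<delta> set contains a cylinder over
  countably many coordinates.
\<close>

section \<open>Weight and G\<delta>-dense sets\<close>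

lemma interior_of_closure_of_idem:
  "T interior_of (T closure_of (T interior_of (T closure_of V))) = T interior_of (T closure_of V)"
proof
  let ?A = "T closure_of V"
  have "T closure_of (T interior_of ?A) \<subseteq> ?A"
    by (simp add: closure_of_minimal interior_of_subset)
  then show "T interior_of (T closure_of (T interior_of ?A)) \<subseteq> T interior_of ?A"
    by (simp add: interior_of_mono)
  show "T interior_of ?A \<subseteq> T interior_of (T closure_of (T interior_of ?A))"
    by (simp add: closure_of_subset interior_of_maximal openin_subset)
qed

lemma regular_open_sets_base:
  assumes "regular_space T"
  shows "is_base T {W. openin T W \<and> T interior_of (T closure_of W) = W}"
    (is "is_base T ?B")
  unfolding is_base_def
proof (intro conjI ballI allI impI)
  fix U assume U: "openin T U"
  have "U \<subseteq> \<Union>{W\<in>?B. W \<subseteq> U}"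
  proof
    fix x assume "x \<in> U"
    obtain V C where V: "openin T V" "closedin T C" "x \<in> V" "V \<subseteq> C" "C \<subseteq> U"
      using assms U \<open>x \<in> U\<close> unfolding neighbourhood_base_of_closedin[symmetric] neighbourhood_base_of
      by meson
    define W where "W = T interior_of (T closure_of V)"
    have "W \<in> ?B"
      unfolding W_def by (simp add: interior_of_closure_of_idem)
    moreover have "x \<in> W"
      unfolding W_def using V by (meson closure_of_subset in_mono interior_of_maximal openin_subset)
    moreover have "W \<subseteq> U"
      unfolding W_def using V by (meson closure_of_minimal dual_order.trans interior_of_subset)
    ultimately show "x \<in> \<Union>{W\<in>?B. W \<subseteq> U}" by blast
  qed
  then show "\<exists>C\<subseteq>?B. \<Union>C = U"
    by (intro exI[of _ "{W\<in>?B. W \<subseteq> U}"]) auto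
qed auto

lemma Gdelta_dense_imp_dense:
  assumes "Gdelta_dense T D"
  shows "T closure_of D = topspace T"
  unfolding dense_intersects_open
  using assms open_imp_gdelta_in unfolding Gdelta_dense_def by blast

text \<open>A regular open set is recovered from its trace on a dense set.\<close>
lemma has_weight_lepoll_Pow_dense:
  assumes "regular_space T" "has_weight T S" "T closure_of D = topspace T"
  shows "S \<lesssim> Pow D"
proof -
  let ?B = "{W. openin T W \<and> T interior_of (T closure_of W) = W}"
  have "S \<lesssim> ?B"
    using assms(2) regular_open_sets_base[OF assms(1)] unfolding has_weight_def by simp
  also have "?B \<lesssim> Pow D"
    unfolding lepoll_def
  proof (intro exI[of _ "\<lambda>W. W \<inter> D"] conjI inj_onI)
    fix W W' assume W: "W \<in> ?B" "W' \<in> ?B" "W \<inter> D = W' \<inter> D"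
    have "T closure_of W = T closure_of (W \<inter> D)" if "openin T W" for W
      using closure_of_openin_Int_superset[of T W D] that assms(3) openin_subset by auto
    then have "T closure_of W = T closure_of W'"
      using W by simp
    moreover have "W = T interior_of (T closure_of W)" "W' = T interior_of (T closure_of W')"
      using W(1,2) by simp_all
    ultimately show "W = W'"
      by simp
  qed auto
  finally show ?thesis .
qed

lemma Pow_lepoll_mono:
  fixes A :: "'a set" and B :: "'b set"
  assumes "A \<lesssim> B" shows "Pow A \<lesssim> Pow B"
proof -
  obtain f where "inj_on f A" "f ` A \<subseteq> B"
    using assms unfolding lepoll_def by blast
  then show ?thesis
    unfolding lepoll_def by (intro exI[of _ "image f"]) (auto intro: inj_on_image_Pow)
qed

section \<open>Coding countable data by sequences\<close>

lemma UNIV_lepoll_nat_fun: "(UNIV :: 'x set) \<lesssim> (UNIV :: (nat \<Rightarrow> 'x) set)"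
  unfolding lepoll_def by (intro exI[of _ "\<lambda>x n. x"]) (auto simp: inj_on_def fun_eq_iff)

lemma nat_fun_lepoll_mono:
  assumes "(UNIV :: 'x set) \<lesssim> (UNIV :: 'y set)"
  shows "(UNIV :: (nat \<Rightarrow> 'x) set) \<lesssim> (UNIV :: (nat \<Rightarrow> 'y) set)"
proof -
  obtain f :: "'x \<Rightarrow> 'y" where "inj f"
    using assms unfolding lepoll_def by blast
  then show ?thesis
    unfolding lepoll_def by (intro exI[of _ "(\<circ>) f"]) (simp add: fun.inj_map)
qed

lemma nat_fun_pair_lepoll:
  "(UNIV :: ((nat \<Rightarrow> 'x) \<times> (nat \<Rightarrow> 'x)) set) \<lesssim> (UNIV :: (nat \<Rightarrow> 'x) set)"
proof -
  define interleave :: "(nat \<Rightarrow> 'x) \<times> (nat \<Rightarrow> 'x) \<Rightarrow> nat \<Rightarrow> 'x"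
    where "interleave = (\<lambda>(f, g) n. if even n then f (n div 2) else g (n div 2))"
  have "inj interleave"
  proof (rule injI)
    fix u v assume eq: "interleave u = interleave v"
    obtain f g f' g' where uv: "u = (f, g)" "v = (f', g')"
      by fastforce
    have "f n = f' n" "g n = g' n" for n
      using fun_cong[OF eq, of "2 * n"] fun_cong[OF eq, of "2 * n + 1"]
      unfolding uv interleave_def by simp_all
    then show "u = v"
      unfolding uv by (simp add: fun_eq_iff)
  qed
  then show ?thesis
    unfolding lepoll_def by blast
qed

lemma nat_fun_nat_fun_lepoll:
  "(UNIV :: (nat \<Rightarrow> nat \<Rightarrow> 'x) set) \<lesssim> (UNIV :: (nat \<Rightarrow> 'x) set)"
proof -
  have "inj (\<lambda>F n. case_prod F (prod_decode n) :: 'x)"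
  proof (rule injI)
    fix F G :: "nat \<Rightarrow> nat \<Rightarrow> 'x"
    assume eq: "(\<lambda>n. case_prod F (prod_decode n)) = (\<lambda>n. case_prod G (prod_decode n))"
    have "F a b = G a b" for a b
      using fun_cong[OF eq, of "prod_encode (a, b)"] by simp
    then show "F = G"
      by (simp add: fun_eq_iff)
  qed
  then show ?thesis
    unfolding lepoll_def by blast
qed

lemma uncountable_UNIV_nat_bool_fun: "uncountable (UNIV :: (nat \<Rightarrow> bool) set)"
proof
  let ?e = "from_nat_into (UNIV :: (nat \<Rightarrow> bool) set)"
  assume "countable (UNIV :: (nat \<Rightarrow> bool) set)"
  then have "range ?e = UNIV"
    by (simp add: range_from_nat_into)
  then obtain n where "?e n = (\<lambda>m. \<not> ?e m m)"
    by (metis UNIV_I imageE)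
  then have "?e n n = (\<not> ?e n n)"
    by (rule fun_cong)
  then show False
    by simp
qed

text \<open>
  A code \<open>(b, t)\<close> describes a column: at a coordinate carrying the subset \<open>A\<close> of \<open>\<alpha>\<close> it takes
  the value stored in the table \<open>t\<close> next to the first occurrence of the membership pattern of
  \<open>b\<close> in \<open>A\<close>.
\<close>
type_synonym 'a column_code = "(nat \<Rightarrow> 'a) \<times> (nat \<Rightarrow> (nat \<Rightarrow> bool) \<times> nat)"

lemma nat_fun_column_code_lepoll:
  assumes "infinite (UNIV :: 'a set)"
  shows "(UNIV :: (nat \<Rightarrow> 'a column_code \<times> nat) set) \<lesssim> (UNIV :: (nat \<Rightarrow> 'a) set)"
proof -
  let ?Q = "UNIV :: (nat \<Rightarrow> 'a) set"
  have pair: "(UNIV :: ('x \<times> 'y) set) \<lesssim> ?Q"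
    if "(UNIV :: 'x set) \<lesssim> ?Q" "(UNIV :: 'y set) \<lesssim> ?Q" for x :: 'x and y :: 'y
  proof -
    have "(UNIV :: ('x \<times> 'y) set) \<lesssim> (UNIV :: ((nat \<Rightarrow> 'a) \<times> (nat \<Rightarrow> 'a)) set)"
      using times_lepoll_mono[OF that] by simp
    then show ?thesis
      using nat_fun_pair_lepoll by (rule lepoll_trans)
  qed
  have seq: "(UNIV :: (nat \<Rightarrow> 'x) set) \<lesssim> ?Q" if "(UNIV :: 'x set) \<lesssim> ?Q" for x :: 'x
    using lepoll_trans[OF nat_fun_lepoll_mono[OF that] nat_fun_nat_fun_lepoll] .
  have "(UNIV :: nat set) \<lesssim> (UNIV :: 'a set)"
    using assms infinite_le_lepoll by blast
  then have nat: "(UNIV :: nat set) \<lesssim> ?Q"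
    using UNIV_lepoll_nat_fun by (rule lepoll_trans)
  have "(UNIV :: bool set) \<lesssim> (UNIV :: 'a set)"
    by (rule finite_lepoll_infinite[OF assms]) simp
  then have "(UNIV :: (nat \<Rightarrow> bool) set) \<lesssim> ?Q"
    by (rule nat_fun_lepoll_mono)
  then have "(UNIV :: ((nat \<Rightarrow> bool) \<times> nat) set) \<lesssim> ?Q"
    using pair nat by blast
  then have "(UNIV :: 'a column_code set) \<lesssim> ?Q"
    using pair[OF lepoll_refl seq] by blast
  then have "(UNIV :: ('a column_code \<times> nat) set) \<lesssim> ?Q"
    using pair nat by blast
  then show ?thesis
    by (rule seq)
qed

section \<open>A matrix realizing countable rows and columns\<close>

definition table_value :: "nat \<Rightarrow> 'a set \<Rightarrow> 'a column_code \<Rightarrow> nat" where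
  "table_value p A y =
     (if \<exists>k. fst (snd y k) = (\<lambda>n. fst y n \<in> A)
      then snd (snd y (LEAST k. fst (snd y k) = (\<lambda>n. fst y n \<in> A))) mod p else 0)"

text \<open>
  A coordinate of the form \<open>req q\<close> answers the list of requests \<open>q\<close>: a code listed in \<open>q\<close> gets
  the value requested at its first occurrence.
\<close>
definition coding_matrix ::
    "nat \<Rightarrow> ('s \<Rightarrow> 'a set) \<Rightarrow> ((nat \<Rightarrow> 'a column_code \<times> nat) \<Rightarrow> 's) \<Rightarrow> 's \<Rightarrow> 'a column_code \<Rightarrow> nat"
  where
  "coding_matrix p emb req i y =
     (if i \<in> range req \<and> y \<in> fst ` range (inv_into UNIV req i)
      then snd (inv_into UNIV req i (LEAST k. fst (inv_into UNIV req i k) = y)) mod p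
      else table_value p (emb i) y)"

lemma coding_matrix_less: "0 < p \<Longrightarrow> coding_matrix p emb req i y < p"
  unfolding coding_matrix_def table_value_def by auto

lemma coding_matrix_realizes_rows:
  assumes "inj req" "countable C"
  shows "\<exists>i. \<forall>y\<in>C. coding_matrix p emb req i y = a y mod p"
proof (cases "C = {}")
  case False
  define q where "q = (\<lambda>k. (from_nat_into C k, a (from_nat_into C k)))"
  have "fst ` range q = C"
    unfolding q_def using range_from_nat_into[OF False assms(2)] by (simp add: image_image)
  moreover have "snd (q k) = a (fst (q k))" for k
    unfolding q_def by simp
  ultimately have "coding_matrix p emb req (req q) y = a y mod p" if "y \<in> C" for y
  proof -
    have ex: "\<exists>k. fst (q k) = y"
      using that \<open>fst ` range q = C\<close> by auto
    have "snd (q (LEAST k. fst (q k) = y)) = a y"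
      using LeastI_ex[OF ex] \<open>\<And>k. snd (q k) = a (fst (q k))\<close> by simp
    then show ?thesis
      using ex assms(1) unfolding coding_matrix_def by auto
  qed
  then show ?thesis
    by blast
qed simp

lemma countable_family_separating_sequence:
  fixes A :: "'j \<Rightarrow> 'a set"
  assumes "countable J" "inj_on A J"
  shows "\<exists>b :: nat \<Rightarrow> 'a. inj_on (\<lambda>j n. b n \<in> A j) J"
proof -
  define witness where "witness j j' = (SOME z. (z \<in> A j) \<noteq> (z \<in> A j'))" for j j'
  define Z where "Z = insert undefined (\<Union>j\<in>J. \<Union>j'\<in>J. {witness j j'})"
  have "countable Z"
    unfolding Z_def using assms(1) by (intro countable_insert countable_UN) auto
  then have Z: "range (from_nat_into Z) = Z"
    by (simp add: Z_def range_from_nat_into)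
  have "j = j'" if jj: "j \<in> J" "j' \<in> J" "(\<lambda>n. from_nat_into Z n \<in> A j) = (\<lambda>n. from_nat_into Z n \<in> A j')"
    for j j'
  proof (rule ccontr)
    assume "j \<noteq> j'"
    then have "A j \<noteq> A j'"
      using assms(2) jj(1,2) by (meson inj_onD)
    then have "\<exists>z. (z \<in> A j) \<noteq> (z \<in> A j')"
      by blast
    then have "(witness j j' \<in> A j) \<noteq> (witness j j' \<in> A j')"
      unfolding witness_def by (rule someI_ex)
    moreover have "witness j j' \<in> Z"
      unfolding Z_def using jj(1,2) by blast
    then have "witness j j' \<in> range (from_nat_into Z)"
      using Z by simp
    ultimately show False
      using jj(3) by (metis rangeE)
  qed
  then show ?thesis
    by (intro exI[of _ "from_nat_into Z"] inj_onI)
qed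

text \<open>
  The table entries \<open>g j + p * s k\<close> carry the same value mod \<open>p\<close> for every \<open>s\<close>, which yields
  uncountably many codes with the prescribed values.
\<close>
lemma column_codes_with_values:
  fixes emb :: "'s \<Rightarrow> 'a set"
  assumes "inj_on emb J" "countable J" "0 < p"
  obtains ys :: "(nat \<Rightarrow> bool) \<Rightarrow> 'a column_code"
  where "inj ys" "\<And>s j. j \<in> J \<Longrightarrow> table_value p (emb j) (ys s) = g j mod p"
proof -
  obtain b :: "nat \<Rightarrow> 'a" where b: "inj_on (\<lambda>j n. b n \<in> emb j) J"
    using countable_family_separating_sequence[OF assms(2,1)] by blast
  define e where "e = from_nat_into J"
  define ys where
    "ys s = (b, \<lambda>k. ((\<lambda>n. b n \<in> emb (e k)), g (e k) + p * (if s k then 1 else 0)))" for s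
  have "inj ys"
  proof (rule injI)
    fix s s' assume "ys s = ys s'"
    then have eq: "p * (if s k then 1 else 0) = p * (if s' k then 1 else 0)" for k
      unfolding ys_def by (metis (no_types, lifting) add_left_cancel prod.inject)
    have "s k = s' k" for k
      using eq[of k] assms(3) by (cases "s k"; cases "s' k") auto
    then show "s = s'"
      by (rule ext)
  qed
  moreover have "table_value p (emb j) (ys s) = g j mod p" if j: "j \<in> J" for s j
  proof -
    have "J \<noteq> {}"
      using j by blast
    then have e: "range e = J" "e k \<in> J" for k
      unfolding e_def using assms(2) by (simp_all add: range_from_nat_into from_nat_into)
    have ex: "\<exists>k. fst (snd (ys s) k) = (\<lambda>n. fst (ys s) n \<in> emb j)"
      using j e(1) unfolding ys_def by auto
    define k where "k = (LEAST k. fst (snd (ys s) k) = (\<lambda>n. fst (ys s) n \<in> emb j))"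
    have "(\<lambda>n. b n \<in> emb (e k)) = (\<lambda>n. b n \<in> emb j)"
      using LeastI_ex[OF ex] unfolding k_def ys_def by simp
    then have "e k = j"
      using b e(2) j by (meson inj_onD)
    then show ?thesis
      using ex unfolding table_value_def k_def[symmetric] by (simp add: ys_def)
  qed
  ultimately show thesis
    using that by blast
qed

lemma coding_matrix_realizes_columns:
  fixes emb :: "'s \<Rightarrow> 'a set"
  assumes "inj emb" "countable J" "0 < p"
  shows "\<exists>y. \<forall>j\<in>J. coding_matrix p emb req j y = g j mod p"
proof -
  obtain ys :: "(nat \<Rightarrow> bool) \<Rightarrow> 'a column_code"
    where ys: "inj ys" "\<And>s j. j \<in> J \<Longrightarrow> table_value p (emb j) (ys s) = g j mod p"
    using column_codes_with_values[OF inj_on_subset[OF assms(1)] assms(2,3)] by blast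
  define requested where "requested = (\<Union>j\<in>J. fst ` range (inv_into UNIV req j))"
  have "countable requested"
    unfolding requested_def using assms(2) by auto
  moreover have "uncountable (range ys)"
    using ys(1) uncountable_UNIV_nat_bool_fun by (simp add: countable_image_inj_eq)
  ultimately obtain s where "ys s \<notin> requested"
    by (metis countable_subset image_subset_iff)
  then have "coding_matrix p emb req j (ys s) = g j mod p" if "j \<in> J" for j
    using that ys(2) unfolding coding_matrix_def requested_def by auto
  then show ?thesis
    by blast
qed

section \<open>The group \<open>\<int>(p)\<^sup>\<sigma>\<close> as a vector space over \<open>\<int>(p)\<close>\<close>

definition Zp_add :: "nat \<Rightarrow> ('s \<Rightarrow> nat) \<Rightarrow> ('s \<Rightarrow> nat) \<Rightarrow> 's \<Rightarrow> nat" where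
  "Zp_add p x y = (\<lambda>i. (x i + y i) mod p)"

definition Zp_scale :: "nat \<Rightarrow> nat \<Rightarrow> ('s \<Rightarrow> nat) \<Rightarrow> 's \<Rightarrow> nat" where
  "Zp_scale p t x = (\<lambda>i. (t * x i) mod p)"

definition Zp_lincomb :: "nat \<Rightarrow> ('s \<Rightarrow> nat) set \<Rightarrow> (('s \<Rightarrow> nat) \<Rightarrow> nat) \<Rightarrow> 's \<Rightarrow> nat" where
  "Zp_lincomb p F c = (\<lambda>i. (\<Sum>h\<in>F. c h * h i) mod p)"

definition Zp_span :: "nat \<Rightarrow> ('s \<Rightarrow> nat) set \<Rightarrow> ('s \<Rightarrow> nat) set" where
  "Zp_span p H = {Zp_lincomb p F c | F c. finite F \<and> F \<subseteq> H}"

text \<open>As \<open>-x = (p - 1) x\<close>, these are exactly the subgroups of \<open>\<int>(p)\<^sup>\<sigma>\<close>.\<close>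
definition Zp_subspace :: "nat \<Rightarrow> ('s \<Rightarrow> nat) set \<Rightarrow> bool" where
  "Zp_subspace p S \<longleftrightarrow> (\<forall>x\<in>S. \<forall>i. x i < p) \<and> (\<lambda>i. 0) \<in> S \<and> (\<forall>x\<in>S. \<forall>y\<in>S. Zp_add p x y \<in> S)"

definition Zp_character :: "nat \<Rightarrow> ('s \<Rightarrow> nat) set \<Rightarrow> (('s \<Rightarrow> nat) \<Rightarrow> complex) \<Rightarrow> bool" where
  "Zp_character p S f \<longleftrightarrow>
     (\<forall>x\<in>S. f x \<in> sphere 0 1) \<and> (\<forall>x\<in>S. \<forall>y\<in>S. f (Zp_add p x y) = f x * f y)"

lemma Zp_group_simps [simp]:
  "carrier (Zp_group p) = {f. \<forall>i. f i < p}"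
  "x \<otimes>\<^bsub>Zp_group p\<^esub> y = Zp_add p x y"
  "\<one>\<^bsub>Zp_group p\<^esub> = (\<lambda>i. 0)"
  by (simp_all add: Zp_group_def Zp_add_def)

lemma Zp_add_scale_neg:
  assumes "0 < p" shows "Zp_add p (Zp_scale p (p - 1) x) x = (\<lambda>i. 0)"
proof -
  have "((p - 1) * x i mod p + x i) mod p = 0" for i
  proof -
    have "((p - 1) * x i mod p + x i) mod p = ((p - 1) * x i + x i) mod p"
      by (simp add: mod_simps)
    also have "(p - 1) * x i + x i = p * x i"
      using assms by (simp add: algebra_simps)
    finally show ?thesis
      by simp
  qed
  then show ?thesis
    unfolding Zp_add_def Zp_scale_def by simp
qed

lemma group_Zp_group:
  assumes "0 < p" shows "group (Zp_group p)"
proof (rule groupI)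
  fix x assume "x \<in> carrier (Zp_group p)"
  moreover have "Zp_scale p (p - 1) x \<in> carrier (Zp_group p)"
    using assms by (simp add: Zp_scale_def)
  ultimately show "\<exists>y\<in>carrier (Zp_group p). y \<otimes>\<^bsub>Zp_group p\<^esub> x = \<one>\<^bsub>Zp_group p\<^esub>"
    using Zp_add_scale_neg[OF assms] by auto
qed (use assms in \<open>auto simp: Zp_add_def mod_simps add.assoc\<close>)

lemma Zp_lincomb_singleton: "(\<forall>i. h i < p) \<Longrightarrow> Zp_lincomb p {h} (\<lambda>_. t) = Zp_scale p t h"
  by (simp add: Zp_lincomb_def Zp_scale_def)

lemma Zp_add_lincomb:
  assumes "finite F" "finite F'"
  shows "Zp_add p (Zp_lincomb p F c) (Zp_lincomb p F' c') =
           Zp_lincomb p (F \<union> F') (\<lambda>h. (if h \<in> F then c h else 0) + (if h \<in> F' then c' h else 0))"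
proof -
  have "(\<Sum>h\<in>F \<union> F'. ((if h \<in> F then c h else 0) + (if h \<in> F' then c' h else 0)) * h i) =
          (\<Sum>h\<in>F. c h * h i) + (\<Sum>h\<in>F'. c' h * h i)" for i
  proof -
    have "(\<Sum>h\<in>F \<union> F'. ((if h \<in> F then c h else 0) + (if h \<in> F' then c' h else 0)) * h i) =
            (\<Sum>h\<in>F \<union> F'. if h \<in> F then c h * h i else 0) + (\<Sum>h\<in>F \<union> F'. if h \<in> F' then c' h * h i else 0)"
      unfolding sum.distrib[symmetric] by (rule sum.cong) (auto simp: algebra_simps)
    also have "\<dots> = (\<Sum>h\<in>F. c h * h i) + (\<Sum>h\<in>F'. c' h * h i)"
      using assms by (simp add: sum.If_cases Int_absorb1 Int_absorb2)
    finally show ?thesis .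
  qed
  then show ?thesis
    unfolding Zp_add_def Zp_lincomb_def by (simp add: mod_simps)
qed

lemma Zp_span_add:
  assumes "x \<in> Zp_span p H" "y \<in> Zp_span p H"
  shows "Zp_add p x y \<in> Zp_span p H"
proof -
  obtain F c F' c' where "x = Zp_lincomb p F c" "y = Zp_lincomb p F' c'"
    "finite F" "F \<subseteq> H" "finite F'" "F' \<subseteq> H"
    using assms unfolding Zp_span_def by blast
  then show ?thesis
    unfolding Zp_span_def by (simp add: Zp_add_lincomb) blast
qed

lemma generate_Zp_group_subset_span:
  assumes "0 < p" "H \<subseteq> carrier (Zp_group p)"
  shows "generate (Zp_group p) H \<subseteq> Zp_span p H"
proof
  fix x assume "x \<in> generate (Zp_group p) H"
  then show "x \<in> Zp_span p H"
  proof (induction rule: generate.induct)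
    case one
    have "Zp_lincomb p {} (\<lambda>_. 0) \<in> Zp_span p H"
      unfolding Zp_span_def by blast
    then show ?case
      by (simp add: Zp_lincomb_def)
  next
    case (incl h)
    then have "h \<in> carrier (Zp_group p)"
      using assms(2) by blast
    then have "Zp_lincomb p {h} (\<lambda>_. 1) = h"
      by (simp add: Zp_lincomb_singleton Zp_scale_def)
    then show ?case
      unfolding Zp_span_def using incl by (metis (mono_tags, lifting) empty_subsetI finite.emptyI
          finite.insertI insert_subset mem_Collect_eq)
  next
    case (inv h)
    then have h: "h \<in> carrier (Zp_group p)"
      using assms(2) by blast
    have "Zp_scale p (p - 1) h \<otimes>\<^bsub>Zp_group p\<^esub> h = \<one>\<^bsub>Zp_group p\<^esub>"
      using Zp_add_scale_neg[OF assms(1)] by simp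
    moreover have "Zp_scale p (p - 1) h \<in> carrier (Zp_group p)"
      using assms(1) by (simp add: Zp_scale_def)
    ultimately have "inv\<^bsub>Zp_group p\<^esub> h = Zp_scale p (p - 1) h"
      by (rule group.inv_equality[OF group_Zp_group[OF assms(1)] _ h])
    also have "\<dots> = Zp_lincomb p {h} (\<lambda>_. p - 1)"
      using h by (simp add: Zp_lincomb_singleton)
    finally show ?case
      unfolding Zp_span_def using inv by blast
  next
    case (eng x y)
    then show ?case
      by (simp add: Zp_span_add)
  qed
qed

lemma subgroup_Zp_group_imp_subspace:
  assumes "subgroup N ((Zp_group p)\<lparr>carrier := K\<rparr>)" "K \<subseteq> carrier (Zp_group p)"
  shows "Zp_subspace p N"
  using subgroup.subset[OF assms(1)] subgroup.one_closed[OF assms(1)] subgroup.m_closed[OF assms(1)] assms(2)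
  unfolding Zp_subspace_def by auto

lemma Zp_subspace_generate:
  assumes "0 < p" "H \<subseteq> carrier (Zp_group p)"
  shows "Zp_subspace p (generate (Zp_group p) H)"
proof -
  have Zp_group: "(Zp_group p)\<lparr>carrier := carrier (Zp_group p)\<rparr> = Zp_group p"
    by (simp add: Zp_group_def)
  have "subgroup (generate (Zp_group p) H) (Zp_group p)"
    using group.generate_is_subgroup[OF group_Zp_group[OF assms(1)] assms(2)] .
  then have "subgroup (generate (Zp_group p) H) ((Zp_group p)\<lparr>carrier := carrier (Zp_group p)\<rparr>)"
    unfolding Zp_group .
  then show ?thesis
    using subgroup_Zp_group_imp_subspace by blast
qed

lemma Zp_subspace_scale:
  assumes "Zp_subspace p S" "x \<in> S"
  shows "Zp_scale p t x \<in> S"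
proof (induction t)
  case 0
  then show ?case
    using assms unfolding Zp_subspace_def Zp_scale_def by simp
next
  case (Suc t)
  have "Zp_scale p (Suc t) x = Zp_add p x (Zp_scale p t x)"
    unfolding Zp_scale_def Zp_add_def by (simp add: mod_simps)
  then show ?case
    using Suc assms unfolding Zp_subspace_def by simp
qed

lemma Zp_lincomb_insert:
  "finite F \<Longrightarrow> h \<notin> F \<Longrightarrow> Zp_lincomb p (insert h F) c = Zp_add p (Zp_scale p (c h) h) (Zp_lincomb p F c)"
  unfolding Zp_lincomb_def Zp_add_def Zp_scale_def by (simp add: mod_simps)

lemma Zp_subspace_lincomb:
  assumes "Zp_subspace p S" "finite F" "F \<subseteq> S"
  shows "Zp_lincomb p F c \<in> S"
  using assms(2,3)
proof (induction F rule: finite_induct)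
  case empty
  then show ?case
    using assms(1) unfolding Zp_subspace_def Zp_lincomb_def by simp
next
  case (insert h F)
  then show ?case
    using assms(1) Zp_subspace_scale[OF assms(1)] unfolding Zp_subspace_def
    by (simp add: Zp_lincomb_insert)
qed

lemma hom_circle_group_iff_Zp_character:
  "\<phi> \<in> hom ((Zp_group p)\<lparr>carrier := N\<rparr>) circle_group \<longleftrightarrow> Zp_character p N \<phi>"
  by (simp add: hom_def Zp_character_def circle_group_def Zp_group_def Zp_add_def Pi_iff)

lemma Zp_character_zero:
  assumes "Zp_character p S w" "Zp_subspace p S"
  shows "w (\<lambda>i. 0) = 1"
proof -
  have z: "(\<lambda>i. 0) \<in> S"
    using assms(2) unfolding Zp_subspace_def by blast
  have eq: "Zp_add p (\<lambda>i. 0) (\<lambda>i. 0) = (\<lambda>i. 0)"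
    unfolding Zp_add_def by simp
  have "w (Zp_add p (\<lambda>i. 0) (\<lambda>i. 0)) = w (\<lambda>i. 0) * w (\<lambda>i. 0)"
    using assms(1) z unfolding Zp_character_def by blast
  then have "w (\<lambda>i. 0) = w (\<lambda>i. 0) * w (\<lambda>i. 0)"
    unfolding eq .
  moreover have "w (\<lambda>i. 0) \<noteq> 0"
    using assms(1) z unfolding Zp_character_def by force
  ultimately show ?thesis
    by simp
qed

lemma Zp_character_scale:
  assumes "Zp_character p S w" "Zp_subspace p S" "x \<in> S"
  shows "w (Zp_scale p t x) = w x ^ t"
proof (induction t)
  case 0
  have "Zp_scale p 0 x = (\<lambda>i. 0)"
    unfolding Zp_scale_def by simp
  then show ?case
    using Zp_character_zero[OF assms(1,2)] by simp
next
  case (Suc t)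
  have "Zp_scale p (Suc t) x = Zp_add p x (Zp_scale p t x)"
    unfolding Zp_scale_def Zp_add_def by (simp add: mod_simps)
  then show ?case
    using Suc assms Zp_subspace_scale[OF assms(2,3)] unfolding Zp_character_def by simp
qed

lemma Zp_character_lincomb:
  assumes "Zp_character p S w" "Zp_subspace p S" "finite F" "F \<subseteq> S"
  shows "w (Zp_lincomb p F c) = (\<Prod>h\<in>F. w h ^ c h)"
  using assms(3,4)
proof (induction F rule: finite_induct)
  case empty
  then show ?case
    using Zp_character_zero[OF assms(1,2)] by (simp add: Zp_lincomb_def)
next
  case (insert h F)
  then have "w (Zp_lincomb p (insert h F) c) = w (Zp_scale p (c h) h) * w (Zp_lincomb p F c)"
    using assms(1) Zp_subspace_scale[OF assms(2)] Zp_subspace_lincomb[OF assms(2)]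
    unfolding Zp_character_def by (simp add: Zp_lincomb_insert)
  then show ?case
    using insert Zp_character_scale[OF assms(1,2)] by simp
qed

lemma Zp_characters_eq_on_span:
  assumes "Zp_character p S v" "Zp_character p S w" "Zp_subspace p S"
    and "C \<subseteq> S" "\<And>h. h \<in> C \<Longrightarrow> v h = w h" "x \<in> Zp_span p C"
  shows "v x = w x"
  using assms(6) Zp_character_lincomb[OF assms(1,3)] Zp_character_lincomb[OF assms(2,3)] assms(4,5)
  unfolding Zp_span_def by (fastforce intro: prod.cong)

section \<open>Extending characters\<close>

lemma Zp_scale_cancel:
  assumes "Factorial_Ring.prime p" "Zp_subspace p S" "\<forall>i. m i < p" "\<not> p dvd t" "Zp_scale p t m \<in> S"
  shows "m \<in> S"
proof -
  have "coprime t p"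
    using prime_imp_coprime[OF assms(1,4)] by (simp add: coprime_commute)
  then obtain u where u: "[t * u = 1] (mod p)"
    using cong_solve_coprime_nat by auto
  have "(u * (t * m i mod p)) mod p = m i" for i
  proof -
    have "[t * u * m i = 1 * m i] (mod p)"
      using u by (rule cong_scalar_right)
    then show ?thesis
      using assms(3) by (simp add: cong_def mod_mult_right_eq ac_simps)
  qed
  then have "Zp_scale p u (Zp_scale p t m) = m"
    unfolding Zp_scale_def by simp
  then show ?thesis
    using Zp_subspace_scale[OF assms(2,5)] by metis
qed

lemma Zp_add_scale_cong:
  "Zp_add p s (Zp_scale p t m) = Zp_add p s' (Zp_scale p t' m) \<Longrightarrow>
     [s i + t * m i = s' i + t' * m i] (mod p)"
  unfolding Zp_add_def Zp_scale_def cong_def by (drule fun_cong[of _ _ i]) (simp add: mod_simps)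

lemma Zp_add_scale_diff:
  assumes "0 < p" "t' \<le> t" "Zp_add p s (Zp_scale p t m) = Zp_add p s' (Zp_scale p t' m)"
  shows "Zp_scale p (t - t') m = Zp_add p s' (Zp_scale p (p - 1) s)"
proof -
  have "[(t - t') * m i = s' i + (p - 1) * s i] (mod p)" for i
  proof -
    have "(t - t') * m i + t' * m i = t * m i"
      using assms(2) by (simp flip: add_mult_distrib)
    then have "[s i + (t - t') * m i + t' * m i = s' i + t' * m i] (mod p)"
      using Zp_add_scale_cong[OF assms(3), of i] by (simp add: add.assoc)
    then have "[s i + (t - t') * m i + (p - 1) * s i = s' i + (p - 1) * s i] (mod p)"
      by (simp add: cong_add_rcancel_nat cong_add)
    moreover have "s i + (t - t') * m i + (p - 1) * s i = (t - t') * m i + p * s i"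
      using assms(1) by (cases p) auto
    moreover have "[(t - t') * m i + p * s i = (t - t') * m i] (mod p)"
      by (simp add: cong_def)
    ultimately show ?thesis
      by (metis cong_sym cong_trans)
  qed
  then show ?thesis
    unfolding Zp_scale_def Zp_add_def cong_def by (simp add: mod_simps)
qed

lemma Zp_add_scale_unique:
  assumes p: "Factorial_Ring.prime p" and S: "Zp_subspace p S" and m: "\<forall>i. m i < p" "m \<notin> S"
    and "s \<in> S" "s' \<in> S" "t < p" "t' < p"
    and eq: "Zp_add p s (Zp_scale p t m) = Zp_add p s' (Zp_scale p t' m)"
  shows "s = s' \<and> t = t'"
proof -
  have "0 < p"
    using p by (simp add: prime_gt_0_nat)
  have t_eq: "t = t'"
    if "t' \<le> t" "t < p" "s \<in> S" "s' \<in> S" "Zp_add p s (Zp_scale p t m) = Zp_add p s' (Zp_scale p t' m)"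
    for s s' t t'
  proof (rule ccontr)
    assume "t \<noteq> t'"
    then have "\<not> p dvd (t - t')"
      using that(1,2) by (simp add: nat_dvd_not_less)
    moreover have "Zp_add p s' (Zp_scale p (p - 1) s) \<in> S"
      using S that(3,4) Zp_subspace_scale[OF S that(3)] unfolding Zp_subspace_def by blast
    then have "Zp_scale p (t - t') m \<in> S"
      using Zp_add_scale_diff[OF \<open>0 < p\<close> that(1,5)] by simp
    ultimately show False
      using Zp_scale_cancel[OF p S m(1)] m(2) by blast
  qed
  have "t = t'"
    using t_eq[of t' t s s'] t_eq[of t t' s' s] assms(5-9) by (cases "t' \<le> t") auto
  then have "[s i = s' i] (mod p)" for i
    using Zp_add_scale_cong[OF eq, of i] by (simp add: cong_add_rcancel_nat)
  then have "s i = s' i" for i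
    using S \<open>s \<in> S\<close> \<open>s' \<in> S\<close> cong_less_modulus_unique_nat unfolding Zp_subspace_def by blast
  then have "s = s'"
    by (rule ext)
  with \<open>t = t'\<close> show ?thesis
    by simp
qed

definition Zp_adjoin :: "nat \<Rightarrow> ('s \<Rightarrow> nat) set \<Rightarrow> ('s \<Rightarrow> nat) \<Rightarrow> ('s \<Rightarrow> nat) set" where
  "Zp_adjoin p S m = {Zp_add p s (Zp_scale p t m) | s t. s \<in> S \<and> t < p}"

lemma Zp_add_scale_add:
  "Zp_add p (Zp_add p s (Zp_scale p t m)) (Zp_add p s' (Zp_scale p t' m)) =
     Zp_add p (Zp_add p s s') (Zp_scale p ((t + t') mod p) m)"
proof -
  have "((s i + t * m i mod p) mod p + (s' i + t' * m i mod p) mod p) mod p =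
          (s i + t * m i + (s' i + t' * m i)) mod p" for i
    by (simp add: mod_simps)
  moreover have "s i + t * m i + (s' i + t' * m i) = s i + s' i + (t + t') * m i" for i
    by (simp add: algebra_simps)
  moreover have "((s i + s' i) mod p + ((t + t') mod p * m i) mod p) mod p =
          (s i + s' i + (t + t') * m i) mod p" for i
    by (simp add: mod_simps)
  ultimately show ?thesis
    unfolding Zp_add_def Zp_scale_def by (simp add: fun_eq_iff)
qed

lemma Zp_scale_zero_add: "Zp_subspace p S \<Longrightarrow> s \<in> S \<Longrightarrow> Zp_add p s (Zp_scale p 0 m) = s"
  unfolding Zp_subspace_def Zp_add_def Zp_scale_def by auto

lemma Zp_subspace_adjoin:
  assumes "1 < p" "Zp_subspace p S" "\<forall>i. m i < p"
  shows "Zp_subspace p (Zp_adjoin p S m)" "S \<subseteq> Zp_adjoin p S m" "m \<in> Zp_adjoin p S m"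
proof -
  have zero: "(\<lambda>i. 0) \<in> S"
    using assms(2) unfolding Zp_subspace_def by blast
  show "Zp_subspace p (Zp_adjoin p S m)"
    unfolding Zp_subspace_def Zp_adjoin_def
  proof (intro conjI ballI allI)
    show "(\<lambda>i. 0) \<in> {Zp_add p s (Zp_scale p t m) |s t. s \<in> S \<and> t < p}"
      using Zp_scale_zero_add[OF assms(2) zero, of m, symmetric] zero assms(1)
      by (blast intro: order.strict_trans[OF zero_less_one])
  next
    fix x y assume "x \<in> {Zp_add p s (Zp_scale p t m) |s t. s \<in> S \<and> t < p}"
      "y \<in> {Zp_add p s (Zp_scale p t m) |s t. s \<in> S \<and> t < p}"
    then obtain s t s' t' where "x = Zp_add p s (Zp_scale p t m)" "y = Zp_add p s' (Zp_scale p t' m)"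
      "s \<in> S" "s' \<in> S"
      by blast
    then have "Zp_add p x y = Zp_add p (Zp_add p s s') (Zp_scale p ((t + t') mod p) m)"
      "Zp_add p s s' \<in> S"
      using assms(2) unfolding Zp_subspace_def by (simp_all add: Zp_add_scale_add)
    moreover have "(t + t') mod p < p"
      using assms(1) by simp
    ultimately show "Zp_add p x y \<in> {Zp_add p s (Zp_scale p t m) |s t. s \<in> S \<and> t < p}"
      by blast
  qed (use assms(1) in \<open>auto simp: Zp_add_def\<close>)
  show "S \<subseteq> Zp_adjoin p S m"
  proof
    fix s assume "s \<in> S"
    then have "s = Zp_add p s (Zp_scale p 0 m)" "(0::nat) < p"
      using Zp_scale_zero_add[OF assms(2)] assms(1) by simp_all
    then show "s \<in> Zp_adjoin p S m"
      unfolding Zp_adjoin_def using \<open>s \<in> S\<close> by blast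
  qed
  have "Zp_add p (\<lambda>i. 0) (Zp_scale p 1 m) = m"
    using assms(3) unfolding Zp_add_def Zp_scale_def by auto
  then show "m \<in> Zp_adjoin p S m"
    unfolding Zp_adjoin_def using zero assms(1) by force
qed

lemma Zp_adjoin_subset:
  "Zp_subspace p K \<Longrightarrow> S \<subseteq> K \<Longrightarrow> m \<in> K \<Longrightarrow> Zp_adjoin p S m \<subseteq> K"
  unfolding Zp_adjoin_def using Zp_subspace_scale unfolding Zp_subspace_def by blast

text \<open>The extension is trivial on \<open>m\<close>; it is well defined because the representation is unique.\<close>
lemma Zp_character_adjoin:
  assumes p: "Factorial_Ring.prime p" and S: "Zp_subspace p S" and m: "\<forall>i. m i < p" "m \<notin> S"
    and f: "Zp_character p S f"
  obtains f' where "Zp_character p (Zp_adjoin p S m) f'" "\<forall>x\<in>S. f' x = f x"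
proof -
  have "1 < p"
    using p by (rule prime_gt_1_nat)
  define f' where "f' z = f (SOME s. s \<in> S \<and> (\<exists>t<p. z = Zp_add p s (Zp_scale p t m)))" for z
  have f': "f' (Zp_add p s (Zp_scale p t m)) = f s" if "s \<in> S" "t < p" for s t
  proof -
    have "\<exists>s'. s' \<in> S \<and> (\<exists>t'<p. Zp_add p s (Zp_scale p t m) = Zp_add p s' (Zp_scale p t' m))"
      using that by blast
    then have "(SOME s'. s' \<in> S \<and> (\<exists>t'<p. Zp_add p s (Zp_scale p t m) = Zp_add p s' (Zp_scale p t' m))) = s"
      by (rule someI2_ex) (use Zp_add_scale_unique[OF p S m] that in blast)
    then show ?thesis
      unfolding f'_def by simp
  qed
  have "Zp_character p (Zp_adjoin p S m) f'"
    unfolding Zp_character_def Zp_adjoin_def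
  proof (intro conjI ballI)
    fix x assume "x \<in> {Zp_add p s (Zp_scale p t m) |s t. s \<in> S \<and> t < p}"
    then show "f' x \<in> sphere 0 1"
      using f f' unfolding Zp_character_def by auto
  next
    fix x y assume "x \<in> {Zp_add p s (Zp_scale p t m) |s t. s \<in> S \<and> t < p}"
      "y \<in> {Zp_add p s (Zp_scale p t m) |s t. s \<in> S \<and> t < p}"
    then obtain s t s' t' where st: "x = Zp_add p s (Zp_scale p t m)" "y = Zp_add p s' (Zp_scale p t' m)"
      "s \<in> S" "t < p" "s' \<in> S" "t' < p"
      by blast
    have "Zp_add p s s' \<in> S"
      using S st unfolding Zp_subspace_def by blast
    then show "f' (Zp_add p x y) = f' x * f' y"
      using st f f' \<open>1 < p\<close> unfolding Zp_character_def by (simp add: Zp_add_scale_add)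
  qed
  moreover have "\<forall>x\<in>S. f' x = f x"
    using f'[of _ 0] Zp_scale_zero_add[OF S] \<open>1 < p\<close> by (metis zero_less_one order.strict_trans)
  ultimately show thesis
    using that by blast
qed

definition graph_on :: "'x set \<Rightarrow> ('x \<Rightarrow> 'y) \<Rightarrow> ('x \<times> 'y) set" where
  "graph_on S f = (\<lambda>x. (x, f x)) ` S"

lemma mem_graph_on_iff: "(x, u) \<in> graph_on S f \<longleftrightarrow> x \<in> S \<and> u = f x"
  unfolding graph_on_def by auto

lemma fst_graph_on: "fst ` graph_on S f = S"
  unfolding graph_on_def by force

definition Zp_character_extensions ::
    "nat \<Rightarrow> ('s \<Rightarrow> nat) set \<Rightarrow> ('s \<Rightarrow> nat) set \<Rightarrow> (('s \<Rightarrow> nat) \<Rightarrow> complex) \<Rightarrow> (('s \<Rightarrow> nat) \<times> complex) set set"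
  where
  "Zp_character_extensions p K N \<phi> =
     {graph_on S f | S f. Zp_subspace p S \<and> N \<subseteq> S \<and> S \<subseteq> K \<and> Zp_character p S f \<and> (\<forall>x\<in>N. f x = \<phi> x)}"

lemma graph_on_fst_The:
  assumes "\<And>x u v. (x, u) \<in> R \<Longrightarrow> (x, v) \<in> R \<Longrightarrow> u = v"
  shows "R = graph_on (fst ` R) (\<lambda>x. THE u. (x, u) \<in> R)"
proof -
  have The: "(THE u. (x, u) \<in> R) = u" if "(x, u) \<in> R" for x u
    using that assms by (intro the_equality) blast+
  show ?thesis
  proof
    show "R \<subseteq> graph_on (fst ` R) (\<lambda>x. THE u. (x, u) \<in> R)"
    proof
      fix z assume "z \<in> R"
      moreover obtain x u where "z = (x, u)"
        by fastforce
      ultimately show "z \<in> graph_on (fst ` R) (\<lambda>x. THE u. (x, u) \<in> R)"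
        using The[of x u] by (simp add: mem_graph_on_iff) (metis fst_conv image_eqI)
    qed
    show "graph_on (fst ` R) (\<lambda>x. THE u. (x, u) \<in> R) \<subseteq> R"
    proof
      fix z assume "z \<in> graph_on (fst ` R) (\<lambda>x. THE u. (x, u) \<in> R)"
      then obtain w where "w \<in> R" "z = (fst w, THE u. (fst w, u) \<in> R)"
        unfolding graph_on_def by blast
      then show "z \<in> R"
        using The[of "fst w" "snd w"] by simp
    qed
  qed
qed

lemma Union_chain_graph_on:
  assumes chain: "subset.chain A C" and graphs: "\<And>G. G \<in> A \<Longrightarrow> \<exists>S f. G = graph_on S f"
  shows "\<exists>S0 f0. \<Union>C = graph_on S0 f0"
proof (cases "C = {}")
  case True
  then show ?thesis
    by (intro exI[of _ "{}"]) (simp add: graph_on_def)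
next
  case False
  have "u = v" if uv: "(x, u) \<in> \<Union>C" "(x, v) \<in> \<Union>C" for x u v
  proof -
    have "finite {(x, u), (x, v)}" "{(x, u), (x, v)} \<subseteq> \<Union>C"
      using uv by auto
    then obtain G where "G \<in> C" "{(x, u), (x, v)} \<subseteq> G"
      by (rule finite_subset_Union_chain[OF _ _ False chain]) blast
    moreover have "G \<in> A"
      using chain \<open>G \<in> C\<close> unfolding subset_chain_def by blast
    then obtain S f where "G = graph_on S f"
      using graphs by blast
    ultimately show ?thesis
      by (simp add: mem_graph_on_iff)
  qed
  then show ?thesis
    using graph_on_fst_The[of "\<Union>C"] by blast
qed

lemma Zp_character_extensions_finite_subset:
  assumes chain: "subset.chain (Zp_character_extensions p K N \<phi>) C" "C \<noteq> {}"
    and graph: "\<Union>C = graph_on S0 f0" and Q: "finite Q" "Q \<subseteq> S0"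
  obtains S f where "Zp_subspace p S" "S \<subseteq> K" "Zp_character p S f" "Q \<subseteq> S" "\<forall>x\<in>Q. f0 x = f x"
    "graph_on S f \<subseteq> graph_on S0 f0"
proof -
  have "finite (graph_on Q f0)"
    unfolding graph_on_def using Q(1) by simp
  moreover have "graph_on Q f0 \<subseteq> \<Union>C"
    unfolding graph graph_on_def using Q(2) by (rule image_mono)
  ultimately obtain G where G: "G \<in> C" "graph_on Q f0 \<subseteq> G"
    by (rule finite_subset_Union_chain[OF _ _ chain(2,1)]) blast
  then have "G \<in> Zp_character_extensions p K N \<phi>"
    using chain(1) unfolding subset_chain_def by blast
  then obtain S f where Sf: "G = graph_on S f" "Zp_subspace p S" "S \<subseteq> K" "Zp_character p S f"
    unfolding Zp_character_extensions_def by blast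
  moreover have "Q \<subseteq> S" "\<forall>x\<in>Q. f0 x = f x"
    using G(2) unfolding Sf(1) graph_on_def by auto
  moreover have "graph_on S f \<subseteq> graph_on S0 f0"
    using G(1) Sf(1) unfolding graph[symmetric] by blast
  ultimately show thesis
    using that by blast
qed

lemma Union_chain_Zp_character_extensions:
  assumes chain: "subset.chain (Zp_character_extensions p K N \<phi>) C" and "C \<noteq> {}"
  shows "\<Union>C \<in> Zp_character_extensions p K N \<phi>"
proof -
  have "\<exists>S0 f0. \<Union>C = graph_on S0 f0"
    using chain by (rule Union_chain_graph_on) (auto simp: Zp_character_extensions_def)
  then obtain S0 f0 where graph: "\<Union>C = graph_on S0 f0"
    by blast
  note finite_subset = Zp_character_extensions_finite_subset[OF chain \<open>C \<noteq> {}\<close> graph]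
  have S0_member: "\<forall>i. x i < p" "x \<in> K" "f0 x \<in> sphere 0 1" if x: "x \<in> S0" for x
  proof -
    obtain S f where "Zp_subspace p S" "S \<subseteq> K" "Zp_character p S f" "x \<in> S" "f0 x = f x"
      by (rule finite_subset[of "{x}"]) (use x in auto)
    then show "\<forall>i. x i < p" "x \<in> K" "f0 x \<in> sphere 0 1"
      unfolding Zp_subspace_def Zp_character_def by auto
  qed
  have closed: "Zp_add p x y \<in> S0 \<and> f0 (Zp_add p x y) = f0 x * f0 y"
    if xy: "x \<in> S0" "y \<in> S0" for x y
  proof -
    obtain S f where Sf: "Zp_subspace p S" "Zp_character p S f" "x \<in> S" "y \<in> S"
      "f0 x = f x" "f0 y = f y" "graph_on S f \<subseteq> graph_on S0 f0"
      by (rule finite_subset[of "{x, y}"]) (use xy in auto)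
    then have "Zp_add p x y \<in> S"
      unfolding Zp_subspace_def by blast
    then have "(Zp_add p x y, f (Zp_add p x y)) \<in> graph_on S0 f0"
      using Sf(7) unfolding graph_on_def by blast
    moreover have "f (Zp_add p x y) = f x * f y"
      using Sf(2-4) unfolding Zp_character_def by blast
    ultimately show ?thesis
      using Sf(5,6) by (simp add: mem_graph_on_iff)
  qed
  obtain G where "G \<in> C"
    using \<open>C \<noteq> {}\<close> by blast
  then have "G \<in> Zp_character_extensions p K N \<phi>"
    using chain unfolding subset_chain_def by blast
  then obtain S f where Sf: "G = graph_on S f" "Zp_subspace p S" "N \<subseteq> S" "\<forall>x\<in>N. f x = \<phi> x"
    unfolding Zp_character_extensions_def by blast
  have S_S0: "x \<in> S0 \<and> f0 x = f x" if "x \<in> S" for x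
  proof -
    have "(x, f x) \<in> \<Union>C"
      using \<open>G \<in> C\<close> Sf(1) that unfolding graph_on_def by blast
    then show ?thesis
      unfolding graph by (simp add: mem_graph_on_iff)
  qed
  have N: "N \<subseteq> S0" "\<forall>x\<in>N. f0 x = \<phi> x"
    using S_S0 Sf(3,4) by auto
  have "(\<lambda>i. 0) \<in> S0"
    using S_S0 Sf(2) unfolding Zp_subspace_def by blast
  have "Zp_subspace p S0"
    unfolding Zp_subspace_def using S0_member(1) closed \<open>(\<lambda>i. 0) \<in> S0\<close> by blast
  moreover have "S0 \<subseteq> K"
    using S0_member(2) by blast
  moreover have "Zp_character p S0 f0"
    unfolding Zp_character_def using S0_member(3) closed by blast
  ultimately show ?thesis
    unfolding graph Zp_character_extensions_def using N(1,2)
    by (intro CollectI exI[of _ S0] exI[of _ f0]) simp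
qed

lemma Zp_character_extends:
  assumes p: "Factorial_Ring.prime p" and K: "Zp_subspace p K" and N: "Zp_subspace p N" "N \<subseteq> K"
    and \<phi>: "Zp_character p N \<phi>"
  obtains \<psi> where "Zp_character p K \<psi>" "\<forall>x\<in>N. \<psi> x = \<phi> x"
proof -
  let ?A = "Zp_character_extensions p K N \<phi>"
  have "graph_on N \<phi> \<in> ?A"
    unfolding Zp_character_extensions_def using N \<phi> by (intro CollectI exI[of _ N] exI[of _ \<phi>]) simp
  then have "\<exists>U\<in>?A. \<forall>Q\<in>C. Q \<subseteq> U" if "subset.chain ?A C" for C
    using Union_chain_Zp_character_extensions[OF that] by (cases "C = {}") auto
  then obtain M where "M \<in> ?A" and max: "\<forall>Q\<in>?A. M \<subseteq> Q \<longrightarrow> Q = M"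
    using subset_Zorn[of ?A] by blast
  then obtain S f where M: "M = graph_on S f"
    and Sf: "Zp_subspace p S" "N \<subseteq> S" "S \<subseteq> K" "Zp_character p S f" "\<forall>x\<in>N. f x = \<phi> x"
    unfolding Zp_character_extensions_def by blast
  have "S = K"
  proof (rule ccontr)
    assume "S \<noteq> K"
    then obtain m where m: "m \<in> K" "m \<notin> S"
      using Sf(3) by blast
    have "\<forall>i. m i < p"
      using K m(1) unfolding Zp_subspace_def by blast
    obtain f' where f': "Zp_character p (Zp_adjoin p S m) f'" "\<forall>x\<in>S. f' x = f x"
      using Zp_character_adjoin[OF p Sf(1) \<open>\<forall>i. m i < p\<close> m(2) Sf(4)] .
    note adjoin = Zp_subspace_adjoin[OF prime_gt_1_nat[OF p] Sf(1) \<open>\<forall>i. m i < p\<close>]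
    have "graph_on (Zp_adjoin p S m) f' \<in> ?A"
      unfolding Zp_character_extensions_def using adjoin Zp_adjoin_subset[OF K Sf(3) m(1)] f' Sf
      by (intro CollectI exI[of _ "Zp_adjoin p S m"] exI[of _ f']) auto
    moreover have "graph_on S f \<subseteq> graph_on (Zp_adjoin p S m) f'"
      using adjoin(2) f'(2) unfolding graph_on_def by auto
    ultimately have "graph_on (Zp_adjoin p S m) f' = graph_on S f"
      using max unfolding M by blast
    then have "Zp_adjoin p S m = S"
      by (metis fst_graph_on)
    then show False
      using adjoin(3) m(2) by simp
  qed
  then show thesis
    using that Sf by blast
qed

section \<open>Coordinate characters and G\<delta> sets\<close>

definition root_of_unity :: "nat \<Rightarrow> nat \<Rightarrow> complex" where
  "root_of_unity p j = cis (2 * pi / real p) ^ j"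

lemma norm_root_of_unity [simp]: "norm (root_of_unity p j) = 1"
  unfolding root_of_unity_def by (simp add: norm_power)

lemma root_of_unity_add: "root_of_unity p (a + b) = root_of_unity p a * root_of_unity p b"
  unfolding root_of_unity_def by (simp add: power_add)

lemma root_of_unity_mod:
  assumes "0 < p" shows "root_of_unity p (j mod p) = root_of_unity p j"
proof -
  have "root_of_unity p p = 1"
    unfolding root_of_unity_def Complex.DeMoivre using assms by simp
  then have "root_of_unity p (p * (j div p)) = 1"
    unfolding root_of_unity_def by (simp add: power_mult)
  then show ?thesis
    using root_of_unity_add[of p "p * (j div p)" "j mod p"] by simp
qed

lemma root_of_unity_cases:
  assumes "0 < p" "w ^ p = 1"
  shows "\<exists>j<p. w = root_of_unity p j"
proof -
  obtain k where "k < p" "w = cis (2 * pi * real k / real p)"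
    using Complex.bij_betw_roots_unity[OF assms(1)] assms(2) unfolding bij_betw_def by auto
  moreover have "root_of_unity p k = cis (2 * pi * real k / real p)"
    unfolding root_of_unity_def Complex.DeMoivre by (simp add: field_simps)
  ultimately show ?thesis
    by auto
qed

lemma Zp_character_root_of_unity:
  assumes "0 < p" "Zp_character p S w" "Zp_subspace p S" "x \<in> S"
  shows "\<exists>j<p. w x = root_of_unity p j"
proof -
  have "Zp_scale p p x = (\<lambda>i. 0)"
    unfolding Zp_scale_def by simp
  then have "w x ^ p = 1"
    using Zp_character_scale[OF assms(2-4), of p] Zp_character_zero[OF assms(2,3)] by simp
  then show ?thesis
    using root_of_unity_cases[OF assms(1)] by blast
qed

lemma Zp_character_coordinate: "0 < p \<Longrightarrow> Zp_character p S (\<lambda>x. root_of_unity p (x i))"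
  unfolding Zp_character_def Zp_add_def by (simp add: root_of_unity_mod root_of_unity_add)

lemma continuous_map_coordinate_character:
  "continuous_map (subtopology (Zp_top p) K) (top_of_set (sphere 0 1)) (\<lambda>x. root_of_unity p (x i))"
proof -
  have "continuous_map (Zp_top p) (discrete_topology {..<p}) (\<lambda>x. x i)"
    unfolding Zp_top_def by (rule continuous_map_product_projection) simp
  moreover have "continuous_map (discrete_topology {..<p}) (top_of_set (sphere 0 1)) (root_of_unity p)"
    by (simp add: Pi_iff)
  ultimately have "continuous_map (Zp_top p) (top_of_set (sphere 0 1)) (root_of_unity p \<circ> (\<lambda>x. x i))"
    by (rule continuous_map_compose)
  then show ?thesis
    by (simp add: o_def continuous_map_from_subtopology)
qed

lemma topspace_Zp_top: "topspace (Zp_top p) = carrier (Zp_group p)"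
  unfolding Zp_top_def by (auto simp: PiE_UNIV_domain)

lemma gdelta_in_product_topology_cylinder:
  assumes "gdelta_in (product_topology T I) S" "g \<in> S"
  obtains J where "countable J"
    "\<And>f. f \<in> topspace (product_topology T I) \<Longrightarrow> (\<forall>j\<in>J. f j = g j) \<Longrightarrow> f \<in> S"
proof -
  obtain \<U> where \<U>: "countable \<U>" "\<forall>W\<in>\<U>. openin (product_topology T I) W" "\<Inter>\<U> = S"
    using assms(1) unfolding gdelta_in_alt intersection_of_def by auto
  have "\<forall>W\<in>\<U>. \<exists>V. finite {i \<in> I. V i \<noteq> topspace (T i)} \<and> g \<in> Pi\<^sub>E I V \<and> Pi\<^sub>E I V \<subseteq> W"
  proof
    fix W assume "W \<in> \<U>"
    then have "openin (product_topology T I) W" "g \<in> W"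
      using \<U>(2,3) assms(2) by auto
    then show "\<exists>V. finite {i \<in> I. V i \<noteq> topspace (T i)} \<and> g \<in> Pi\<^sub>E I V \<and> Pi\<^sub>E I V \<subseteq> W"
      unfolding openin_product_topology_alt by blast
  qed
  from bchoice[OF this] obtain V where V: "\<forall>W\<in>\<U>.
      finite {i \<in> I. V W i \<noteq> topspace (T i)} \<and> g \<in> Pi\<^sub>E I (V W) \<and> Pi\<^sub>E I (V W) \<subseteq> W"
    by blast
  define J where "J = (\<Union>W\<in>\<U>. {i \<in> I. V W i \<noteq> topspace (T i)})"
  have "countable J"
    unfolding J_def using V by (intro countable_UN[OF \<U>(1)] countable_finite) blast
  moreover have "f \<in> S" if f: "f \<in> topspace (product_topology T I)" "\<forall>j\<in>J. f j = g j" for f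
  proof -
    have "f \<in> Pi\<^sub>E I (V W)" if W: "W \<in> \<U>" for W
    proof -
      have "f i \<in> V W i" if "i \<in> I" for i
      proof (cases "V W i = topspace (T i)")
        case True
        then show ?thesis
          using f(1) that by (simp add: PiE_iff)
      next
        case False
        then have "f i = g i"
          using f(2) W that unfolding J_def by blast
        then show ?thesis
          using V W that by (auto simp: PiE_iff)
      qed
      then show ?thesis
        using f(1) by (simp add: PiE_iff)
    qed
    then show ?thesis
      using V \<U>(3) by blast
  qed
  ultimately show thesis
    using that by blast
qed

section \<open>Sets realizing countable rows and columns\<close>

lemma Zp_independent_if_finite_rows_realized:
  assumes "1 < p" and rows: "\<And>C a. finite C \<Longrightarrow> C \<subseteq> H \<Longrightarrow> \<exists>i. \<forall>h\<in>C. h i = a h mod p"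
  shows "Zp_independent p H"
  unfolding Zp_independent_def
proof (intro allI impI ballI)
  fix F c h0
  assume F: "finite F \<and> F \<subseteq> H \<and> (\<forall>h\<in>F. c h < p) \<and> (\<forall>i. (\<Sum>h\<in>F. c h * h i) mod p = 0)"
    and "h0 \<in> F"
  obtain i where i: "\<forall>h\<in>F. h i = (if h = h0 then 1 else 0) mod p"
    using rows[of F "\<lambda>h. if h = h0 then 1 else 0"] F by blast
  have "(\<Sum>h\<in>F. c h * h i) = (\<Sum>h\<in>F. if h = h0 then c h else 0)"
    using assms(1) i by (intro sum.cong) auto
  also have "\<dots> = c h0"
    using F \<open>h0 \<in> F\<close> by simp
  finally have "c h0 mod p = 0"
    using F by metis
  then show "c h0 = 0"
    using F \<open>h0 \<in> F\<close> by simp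
qed

lemma Gdelta_dense_if_countable_columns_realized:
  fixes H :: "('s \<Rightarrow> nat) set"
  assumes "H \<subseteq> carrier (Zp_group p)"
    and columns: "\<And>J g. countable J \<Longrightarrow> \<exists>h\<in>H. \<forall>j\<in>J. h j = g j mod p"
  shows "Gdelta_dense (Zp_top p) H"
  unfolding Gdelta_dense_def
proof (intro allI impI)
  fix S :: "('s \<Rightarrow> nat) set"
  assume S: "gdelta_in (Zp_top p) S \<and> S \<noteq> {}"
  then obtain g where "g \<in> S"
    by blast
  have "gdelta_in (product_topology (\<lambda>_. discrete_topology {..<p}) UNIV) S"
    using S unfolding Zp_top_def by blast
  then obtain J where "countable J" and J: "\<And>f. f \<in> topspace (Zp_top p) \<Longrightarrow> (\<forall>j\<in>J. f j = g j) \<Longrightarrow> f \<in> S"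
    unfolding Zp_top_def by (rule gdelta_in_product_topology_cylinder[OF _ \<open>g \<in> S\<close>]) blast
  obtain h where "h \<in> H" and h: "\<forall>j\<in>J. h j = g j mod p"
    using columns[OF \<open>countable J\<close>] by blast
  have "g \<in> topspace (Zp_top p)"
    using S \<open>g \<in> S\<close> gdelta_in_subset by blast
  then have "\<forall>j\<in>J. h j = g j"
    using h by (simp add: topspace_Zp_top)
  moreover have "h \<in> topspace (Zp_top p)"
    using \<open>h \<in> H\<close> assms(1) topspace_Zp_top by blast
  ultimately have "h \<in> S"
    using J by blast
  then show "H \<inter> S \<noteq> {}"
    using \<open>h \<in> H\<close> by blast
qed

lemma countable_subset_Zp_span:
  assumes "countable N" "N \<subseteq> Zp_span p H"
  obtains C where "C \<subseteq> H" "countable C" "N \<subseteq> Zp_span p C"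
proof -
  have "\<forall>x\<in>N. \<exists>F. finite F \<and> F \<subseteq> H \<and> (\<exists>c. x = Zp_lincomb p F c)"
  proof
    fix x assume "x \<in> N"
    then have "x \<in> Zp_span p H"
      using assms(2) by blast
    then show "\<exists>F. finite F \<and> F \<subseteq> H \<and> (\<exists>c. x = Zp_lincomb p F c)"
      unfolding Zp_span_def by blast
  qed
  from bchoice[OF this] obtain F where F: "\<forall>x\<in>N. finite (F x) \<and> F x \<subseteq> H \<and> (\<exists>c. x = Zp_lincomb p (F x) c)"
    by blast
  show thesis
  proof
    show "(\<Union>x\<in>N. F x) \<subseteq> H"
      using F by blast
    show "countable (\<Union>x\<in>N. F x)"
      using F by (intro countable_UN[OF assms(1)] countable_finite) blast
    show "N \<subseteq> Zp_span p (\<Union>x\<in>N. F x)"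
    proof
      fix x assume "x \<in> N"
      then obtain c where "x = Zp_lincomb p (F x) c" "finite (F x)" "F x \<subseteq> (\<Union>x\<in>N. F x)"
        using F by blast
      then show "x \<in> Zp_span p (\<Union>x\<in>N. F x)"
        unfolding Zp_span_def by blast
    qed
  qed
qed

lemma property_h_generate_if_countable_rows_realized:
  assumes p: "Factorial_Ring.prime p" and H: "H \<subseteq> carrier (Zp_group p)"
    and rows: "\<And>C a. countable C \<Longrightarrow> C \<subseteq> H \<Longrightarrow> \<exists>i. \<forall>h\<in>C. h i = a h mod p"
  shows "property_h ((Zp_group p)\<lparr>carrier := generate (Zp_group p) H\<rparr>)
           (subtopology (Zp_top p) (generate (Zp_group p) H))"
  unfolding property_h_def h_embedded_def
proof (intro allI impI ballI)
  let ?K = "generate (Zp_group p) H"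
  have "0 < p"
    using p by (simp add: prime_gt_0_nat)
  have K: "Zp_subspace p ?K" "?K \<subseteq> carrier (Zp_group p)"
    using Zp_subspace_generate[OF \<open>0 < p\<close> H] unfolding Zp_subspace_def by auto
  fix N \<phi>
  assume N: "subgroup N ((Zp_group p)\<lparr>carrier := ?K\<rparr>) \<and> countable N"
    and "\<phi> \<in> hom ((Zp_group p)\<lparr>carrier := ?K\<rparr>\<lparr>carrier := N\<rparr>) circle_group"
  then have \<phi>: "Zp_character p N \<phi>"
    by (simp add: hom_circle_group_iff_Zp_character)
  have "N \<subseteq> ?K"
    using subgroup.subset[OF conjunct1[OF N]] by simp
  have "Zp_subspace p N"
    using subgroup_Zp_group_imp_subspace[OF conjunct1[OF N] K(2)] .
  obtain \<xi> where \<xi>: "Zp_character p ?K \<xi>" "\<forall>x\<in>N. \<xi> x = \<phi> x"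
    using Zp_character_extends[OF p K(1) \<open>Zp_subspace p N\<close> \<open>N \<subseteq> ?K\<close> \<phi>] .
  have "N \<subseteq> Zp_span p H"
    using \<open>N \<subseteq> ?K\<close> generate_Zp_group_subset_span[OF \<open>0 < p\<close> H] by (rule order.trans)
  then obtain C where C: "C \<subseteq> H" "countable C" "N \<subseteq> Zp_span p C"
    using countable_subset_Zp_span[OF conjunct2[OF N]] by blast
  have "C \<subseteq> ?K"
    using C(1) by (auto intro: generate.incl)
  have "\<forall>h\<in>C. \<exists>j<p. \<xi> h = root_of_unity p j"
    using Zp_character_root_of_unity[OF \<open>0 < p\<close> \<xi>(1) K(1)] \<open>C \<subseteq> ?K\<close> by (simp add: subset_iff)
  from bchoice[OF this] obtain a where a: "\<forall>h\<in>C. a h < p \<and> \<xi> h = root_of_unity p (a h)"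
    by blast
  obtain i where i: "\<forall>h\<in>C. h i = a h mod p"
    using rows[OF C(2,1)] by blast
  let ?\<psi> = "\<lambda>x. root_of_unity p (x i)"
  have "?\<psi> x = \<xi> x" if "x \<in> Zp_span p C" for x
    using Zp_characters_eq_on_span[OF Zp_character_coordinate[OF \<open>0 < p\<close>] \<xi>(1) K(1) \<open>C \<subseteq> ?K\<close> _ that] a i
    by simp
  then show "\<exists>\<psi>\<in>hom ((Zp_group p)\<lparr>carrier := ?K\<rparr>) circle_group.
      continuous_map (subtopology (Zp_top p) ?K) (top_of_set (sphere 0 1)) \<psi> \<and> (\<forall>x\<in>N. \<psi> x = \<phi> x)"
    using Zp_character_coordinate[OF \<open>0 < p\<close>] continuous_map_coordinate_character C(3) \<xi>(2)
    by (intro bexI[of _ ?\<psi>]) (auto simp: hom_circle_group_iff_Zp_character)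
qed

lemma columns_realize_rows:
  assumes rows: "\<And>C a. countable C \<Longrightarrow> \<exists>i. \<forall>y\<in>C. M i y = a y mod p"
    and "countable C" "C \<subseteq> range (\<lambda>y i. M i y)"
  shows "\<exists>i. \<forall>h\<in>C. h i = a h mod p"
proof -
  let ?col = "\<lambda>y i. M i y"
  let ?y = "inv_into UNIV ?col"
  obtain i where i: "\<forall>y\<in>?y ` C. M i y = a (?col y) mod p"
    using rows[of "?y ` C" "\<lambda>y. a (?col y)"] assms(2) by blast
  have "h i = a h mod p" if "h \<in> C" for h
    using i that assms(3) f_inv_into_f[of h ?col UNIV] by (metis image_eqI subsetD)
  then show ?thesis
    by blast
qed

lemma weight_lepoll_Pow_if_Gdelta_dense:
  fixes A :: "'a set"
  assumes "topological_group G T" "compact_space T" "has_weight T S" "Gdelta_dense T D" "D \<lesssim> A"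
  shows "S \<lesssim> Pow A"
proof -
  have "Hausdorff_space T"
    using assms(1) unfolding topological_group_def by blast
  then have "S \<lesssim> Pow D"
    using has_weight_lepoll_Pow_dense[OF compact_Hausdorff_imp_regular_space[OF assms(2)] assms(3)
        Gdelta_dense_imp_dense[OF assms(4)]] by simp
  then show ?thesis
    using Pow_lepoll_mono[OF assms(5)] by (rule lepoll_trans)
qed

lemma realizing_set_exists:
  assumes "0 < p" "infinite (UNIV :: 's set)" "(UNIV :: 's set) \<lesssim> Pow (UNIV :: 'a set)"
    and "(UNIV :: (nat \<Rightarrow> 'a) set) \<lesssim> (UNIV :: 's set)"
  obtains H :: "('s \<Rightarrow> nat) set" where "H \<subseteq> carrier (Zp_group p)"
    "\<And>C a. countable C \<Longrightarrow> C \<subseteq> H \<Longrightarrow> \<exists>i. \<forall>h\<in>C. h i = a h mod p"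
    "\<And>J g. countable J \<Longrightarrow> \<exists>h\<in>H. \<forall>j\<in>J. h j = g j mod p"
proof -
  obtain emb :: "'s \<Rightarrow> 'a set" where emb: "inj emb"
    using assms(3) unfolding lepoll_def by auto
  have "infinite (UNIV :: 'a set)"
  proof
    assume "finite (UNIV :: 'a set)"
    then have "finite (range emb)"
      by (simp add: Finite_Set.finite_set finite_subset[OF subset_UNIV])
    then show False
      using finite_imageD[OF _ emb] assms(2) by blast
  qed
  then have "(UNIV :: (nat \<Rightarrow> 'a column_code \<times> nat) set) \<lesssim> (UNIV :: 's set)"
    by (rule lepoll_trans[OF nat_fun_column_code_lepoll assms(4)])
  then obtain req :: "(nat \<Rightarrow> 'a column_code \<times> nat) \<Rightarrow> 's" where "inj req"
    unfolding lepoll_def by auto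
  define M where "M = coding_matrix p emb req"
  define H where "H = range (\<lambda>y i. M i y)"
  have carrier: "H \<subseteq> carrier (Zp_group p)"
    unfolding H_def M_def using coding_matrix_less[OF assms(1)] by auto
  have rows: "\<exists>i. \<forall>h\<in>C. h i = a h mod p" if "countable C" "C \<subseteq> H" for C a
    using columns_realize_rows[where M = "coding_matrix p emb req",
          OF coding_matrix_realizes_rows[OF \<open>inj req\<close>]] that
    unfolding H_def M_def by simp
  have columns: "\<exists>h\<in>H. \<forall>j\<in>J. h j = g j mod p" if J: "countable J" for J g
  proof -
    obtain y where "\<forall>j\<in>J. M j y = g j mod p"
      using coding_matrix_realizes_columns[OF emb J assms(1), where req = req and g = g]
      unfolding M_def by blast
    then show ?thesis
      unfolding H_def by (intro bexI[of _ "\<lambda>i. M i y"]) auto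
  qed
  show thesis
    by (rule that[OF carrier rows columns])
qed

theorem proposition3p4:
  fixes p :: nat
    and G :: "('g, 'b) monoid_scheme" and T :: "'g topology" and D :: "'g set"
  assumes "Factorial_Ring.prime p"
    and "infinite (UNIV :: 's set)"
    \<comment> \<open>m(sigma) <= alpha: some compact group of weight sigma has a G_delta-dense subset of size <= alpha\<close>
    and "topological_group G T" and "compact_space T" and "has_weight T (UNIV :: 's set)"
    and "D \<subseteq> carrier G" and "Gdelta_dense T D" and "D \<lesssim> (UNIV :: 'a set)"
    \<comment> \<open>alpha^omega <= sigma\<close>
    and "(UNIV :: (nat \<Rightarrow> 'a) set) \<lesssim> (UNIV :: 's set)"
  shows "\<exists>H :: ('s \<Rightarrow> nat) set. H \<subseteq> carrier (Zp_group p) \<and> Zp_independent p H \<and>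
           Gdelta_dense (Zp_top p) H \<and>
           property_h ((Zp_group p)\<lparr>carrier := generate (Zp_group p) H\<rparr>)
                      (subtopology (Zp_top p) (generate (Zp_group p) H))"
proof -
  have "0 < p"
    using assms(1) by (simp add: prime_gt_0_nat)
  have "(UNIV :: 's set) \<lesssim> Pow (UNIV :: 'a set)"
    using weight_lepoll_Pow_if_Gdelta_dense[OF assms(3,4,5,7,8)] .
  then obtain H :: "('s \<Rightarrow> nat) set" where H: "H \<subseteq> carrier (Zp_group p)"
    and rows: "\<And>C a. countable C \<Longrightarrow> C \<subseteq> H \<Longrightarrow> \<exists>i. \<forall>h\<in>C. h i = a h mod p"
    and columns: "\<And>J g. countable J \<Longrightarrow> \<exists>h\<in>H. \<forall>j\<in>J. h j = g j mod p"
    using realizing_set_exists[OF \<open>0 < p\<close> assms(2) _ assms(9)] by blast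
  have "Zp_independent p H"
  proof (rule Zp_independent_if_finite_rows_realized[OF prime_gt_1_nat[OF assms(1)]])
    show "\<exists>i. \<forall>h\<in>C. h i = a h mod p" if "finite C" "C \<subseteq> H" for C a
      using rows[OF countable_finite[OF that(1)] that(2)] .
  qed
  moreover have "Gdelta_dense (Zp_top p) H"
    using Gdelta_dense_if_countable_columns_realized[OF H columns] .
  moreover have "property_h ((Zp_group p)\<lparr>carrier := generate (Zp_group p) H\<rparr>)
      (subtopology (Zp_top p) (generate (Zp_group p) H))"
    using property_h_generate_if_countable_rows_realized[OF assms(1) H rows] .
  ultimately show ?thesis
    using H by (intro exI[of _ H]) simp
qed

end
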